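(* For every $n \geq 2$, $n-1$ divides $d_{n1}$.
   Context: A linear arrangement of $\{1,\ldots,n\}$ is a sequence $a_1\cdots a_n$ in which each of $1,\ldots,n$ appears exactly once. It contains the pattern $ij$ if $a_t=i$ and $a_{t+1}=j$ for some $t$; otherwise it avoids it. $d_{n1}$ is the number of linear arrangements of $\{1,\ldots,n\}$ that avoid all of the patterns $12, 23, \ldots, (n-1)n$ and contain the pattern $n1$. *)

theory Defs
  imports Main
begin

definition linear_arrangements :: "nat \<Rightarrow> nat list set" where
  "linear_arrangements n = {xs. distinct xs \<and> set xs = {1..n}}"

definition contains_pattern :: "nat list \<Rightarrow> nat \<Rightarrow> nat \<Rightarrow> bool" where
  "contains_pattern xs i j \<longleftrightarrow> (\<exists>t. Suc t < length xs \<and> xs ! t = i \<and> xs ! Suc t = j)"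

definition d_n1 :: "nat \<Rightarrow> nat" where
  "d_n1 n = card {xs \<in> linear_arrangements n.
      (\<forall>i. 1 \<le> i \<and> i < n \<longrightarrow> \<not> contains_pattern xs i (i + 1)) \<and> contains_pattern xs n 1}"

end

theory Submission
  imports Defs "HOL-Number_Theory.Cong"
begin

text \<open>Deleting n from an arrangement counted by d_n1 n leaves, with m = n - 1, an arrangement
  of {1..m} in which no a is immediately followed by its cyclic successor a mod m + 1, because n
  stood directly before 1 and so an adjacent pair m 1 could only arise from the forbidden m n.
  Inserting n in front of 1 undoes the deletion.  The rotations x \<mapsto> x + d (mod m) preserve these
  cyclically succession-free arrangements and carry any first entry to any other, so the m
  classes by first entry are equinumerous.\<close>

definition adjs :: "'a list \<Rightarrow> ('a \<times> 'a) list" where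
  "adjs xs = zip xs (tl xs)"

lemma adjs_simps [simp]:
  "adjs [] = []" "adjs [x] = []" "adjs (x # y # zs) = (x, y) # adjs (y # zs)"
  by (simp_all add: adjs_def)

lemma contains_pattern_iff_adjs: "contains_pattern xs i j \<longleftrightarrow> (i, j) \<in> set (adjs xs)"
  by (force simp: contains_pattern_def adjs_def set_zip nth_tl)

lemma adjs_in_set: "(a, b) \<in> set (adjs xs) \<Longrightarrow> a \<in> set xs \<and> b \<in> set xs"
  by (induction xs rule: induct_list012) auto

lemma adjs_map: "adjs (map f xs) = map (map_prod f f) (adjs xs)"
  by (induction xs rule: induct_list012) auto

fun insert_before :: "'a \<Rightarrow> 'a \<Rightarrow> 'a list \<Rightarrow> 'a list" where
  "insert_before a b [] = []"
| "insert_before a b (x # xs) =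
     (if x = b then a # b # insert_before a b xs else x # insert_before a b xs)"

lemma set_insert_before:
  "set (insert_before a b xs) = set xs \<union> (if b \<in> set xs then {a} else {})"
  by (induction xs) auto

lemma distinct_insert_before:
  "distinct xs \<Longrightarrow> a \<notin> set xs \<Longrightarrow> distinct (insert_before a b xs)"
  by (induction xs) (auto simp: set_insert_before)

lemma insert_before_absent: "b \<notin> set xs \<Longrightarrow> insert_before a b xs = xs"
  by (induction xs) auto

lemma filter_insert_before:
  "a \<notin> set xs \<Longrightarrow> filter (\<lambda>x. x \<noteq> a) (insert_before a b xs) = xs"
  by (induction xs) auto

lemma insert_before_filter:
  assumes "distinct xs" "a \<noteq> b" "(a, b) \<in> set (adjs xs)"
  shows "insert_before a b (filter (\<lambda>x. x \<noteq> a) xs) = xs"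
  using assms
proof (induction xs rule: induct_list012)
  case (3 x y zs)
  show ?case
  proof (cases "x = a")
    case True
    with "3.prems" have "y = b" "a \<notin> set zs" "b \<notin> set zs"
      by (auto dest: adjs_in_set)
    with True \<open>a \<noteq> b\<close> show ?thesis
      by (auto simp: insert_before_absent filter_id_conv)
  next
    case False
    with "3.prems" have "x \<noteq> b"
      by (auto dest: adjs_in_set)
    with False "3.prems" "3.IH"(2) show ?thesis by auto
  qed
qed auto

lemma adjs_insert_before_new: "b \<in> set xs \<Longrightarrow> (a, b) \<in> set (adjs (insert_before a b xs))"
proof (induction xs rule: induct_list012)
  case (3 x y zs)
  then show ?case by (cases "y = b") auto
qed auto

lemma adjs_insert_before_unchanged:
  assumes "u \<noteq> a" "w \<noteq> a" "w \<noteq> b"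
  shows "(u, w) \<in> set (adjs (insert_before a b xs)) \<longleftrightarrow> (u, w) \<in> set (adjs xs)"
  using assms
proof (induction xs rule: induct_list012)
  case (3 x y zs)
  then show ?case by (cases "y = b") auto
qed auto

lemma adjs_insert_before_into:
  assumes "a \<notin> set xs"
  shows "(u, a) \<in> set (adjs (insert_before a b xs)) \<longleftrightarrow> (u, b) \<in> set (adjs xs)"
  using assms
proof (induction xs rule: induct_list012)
  case (3 x y zs)
  then show ?case by (cases "y = b") auto
qed auto

definition cyclic_succ_free :: "nat \<Rightarrow> nat list set" where
  "cyclic_succ_free m =
     {ys \<in> linear_arrangements m. \<forall>(a, b) \<in> set (adjs ys). b \<noteq> a mod m + 1}"

definition cyclic_succ_free_from :: "nat \<Rightarrow> nat \<Rightarrow> nat list set" where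
  "cyclic_succ_free_from m j = {ys \<in> cyclic_succ_free m. hd ys = j}"

lemma finite_cyclic_succ_free: "finite (cyclic_succ_free m)"
proof -
  have "cyclic_succ_free m \<subseteq> {xs. set xs \<subseteq> {1..m} \<and> length xs \<le> m}"
    by (auto simp: cyclic_succ_free_def linear_arrangements_def dest: distinct_card[symmetric])
  then show ?thesis
    using finite_lists_length_le[of "{1..m}" m] by (rule finite_subset) simp
qed

lemma cyclic_succ_free_hd:
  assumes "0 < m" "ys \<in> cyclic_succ_free m"
  shows "ys \<noteq> [] \<and> hd ys \<in> {1..m}"
proof -
  have "set ys = {1..m}"
    using assms(2) by (simp add: cyclic_succ_free_def linear_arrangements_def)
  moreover from this assms(1) have "ys \<noteq> []" by auto
  ultimately show ?thesis using hd_in_set by blast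
qed

definition cyc_shift :: "nat \<Rightarrow> nat \<Rightarrow> nat \<Rightarrow> nat" where
  "cyc_shift m d x = (x - 1 + d) mod m + 1"

lemma cyc_shift_in_range: "0 < m \<Longrightarrow> cyc_shift m d x \<in> {1..m}"
  by (simp add: cyc_shift_def Suc_leI)

lemma cyc_shift_succ: "1 \<le> x \<Longrightarrow> cyc_shift m d (x mod m + 1) = cyc_shift m d x mod m + 1"
  by (simp add: cyc_shift_def mod_Suc_eq mod_add_left_eq)

lemma inj_on_cyc_shift: "inj_on (cyc_shift m d) {1..m}"
proof (rule inj_onI)
  fix x y assume "x \<in> {1..m}" "y \<in> {1..m}" "cyc_shift m d x = cyc_shift m d y"
  then have "[x - 1 + d = y - 1 + d] (mod m)"
    by (simp only: cyc_shift_def cong_def add_right_cancel)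
  then have "[x - 1 = y - 1] (mod m)"
    by (simp only: cong_add_rcancel_nat)
  moreover have "x - 1 < m" "y - 1 < m"
    using \<open>x \<in> {1..m}\<close> \<open>y \<in> {1..m}\<close> by auto
  ultimately have "x - 1 = y - 1" by (rule cong_less_modulus_unique_nat)
  with \<open>x \<in> {1..m}\<close> \<open>y \<in> {1..m}\<close> show "x = y" by auto
qed

lemma cyc_shift_onto:
  assumes "0 < m"
  shows "cyc_shift m d ` {1..m} = {1..m}"
  using cyc_shift_in_range[OF assms] inj_on_cyc_shift by (intro endo_inj_surj) auto

lemma cyc_shift_hits:
  assumes "j \<in> {1..m}" "j' \<in> {1..m}"
  shows "cyc_shift m (j' + m - j) j = j'"
proof -
  have shift: "j - 1 + (j' + m - j) = (j' - 1) + m" using assms by auto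
  show ?thesis using assms unfolding cyc_shift_def shift by (subst mod_add_self2) auto
qed

lemma map_cyc_shift_cyclic_succ_free:
  assumes m: "0 < m" and ys: "ys \<in> cyclic_succ_free m"
  shows "map (cyc_shift m d) ys \<in> cyclic_succ_free m"
proof -
  have set_ys: "set ys = {1..m}" and "distinct ys"
    and free: "\<forall>(a, b) \<in> set (adjs ys). b \<noteq> a mod m + 1"
    using ys by (auto simp: cyclic_succ_free_def linear_arrangements_def)
  have "cyc_shift m d b \<noteq> cyc_shift m d a mod m + 1" if ab: "(a, b) \<in> set (adjs ys)" for a b
  proof
    have a: "a \<in> {1..m}" and b: "b \<in> {1..m}" using adjs_in_set[OF ab] set_ys by auto
    assume "cyc_shift m d b = cyc_shift m d a mod m + 1"
    also have "\<dots> = cyc_shift m d (a mod m + 1)"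
      using a by (simp only: cyc_shift_succ atLeastAtMost_iff)
    finally have "b = a mod m + 1"
      by (rule inj_onD[OF inj_on_cyc_shift]) (use b m in \<open>auto intro: Suc_leI\<close>)
    with free ab show False by auto
  qed
  then have "\<forall>(a', b') \<in> set (adjs (map (cyc_shift m d) ys)). b' \<noteq> a' mod m + 1"
    by (auto simp: adjs_map)
  moreover have "set (map (cyc_shift m d) ys) = {1..m}"
    using set_ys cyc_shift_onto[OF m] by simp
  moreover have "distinct (map (cyc_shift m d) ys)"
    using \<open>distinct ys\<close> inj_on_cyc_shift set_ys by (simp add: distinct_map)
  ultimately show ?thesis
    by (simp add: cyclic_succ_free_def linear_arrangements_def)
qed

lemma card_cyclic_succ_free_from_le:
  assumes m: "0 < m" and j: "j \<in> {1..m}" and j': "j' \<in> {1..m}"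
  shows "card (cyclic_succ_free_from m j) \<le> card (cyclic_succ_free_from m j')"
proof (rule card_inj_on_le)
  let ?f = "map (cyc_shift m (j' + m - j))"
  show "inj_on ?f (cyclic_succ_free_from m j)"
    by (rule inj_onI, rule map_inj_on, assumption, rule inj_on_subset[OF inj_on_cyc_shift])
      (auto simp: cyclic_succ_free_from_def cyclic_succ_free_def linear_arrangements_def)
  show "?f ` cyclic_succ_free_from m j \<subseteq> cyclic_succ_free_from m j'"
    using map_cyc_shift_cyclic_succ_free[OF m] cyclic_succ_free_hd[OF m] cyc_shift_hits[OF j j']
    by (auto simp: cyclic_succ_free_from_def hd_map)
  show "finite (cyclic_succ_free_from m j')"
    using finite_cyclic_succ_free by (simp add: cyclic_succ_free_from_def)
qed

lemma card_cyclic_succ_free: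
  assumes m: "0 < m"
  shows "card (cyclic_succ_free m) = m * card (cyclic_succ_free_from m 1)"
proof -
  have "cyclic_succ_free m = (\<Union>j\<in>{1..m}. cyclic_succ_free_from m j)"
    using cyclic_succ_free_hd[OF m] by (auto simp: cyclic_succ_free_from_def)
  also have "card \<dots> = (\<Sum>j\<in>{1..m}. card (cyclic_succ_free_from m j))"
    using finite_cyclic_succ_free
    by (intro card_UN_disjoint) (auto simp: cyclic_succ_free_from_def)
  also have "\<dots> = (\<Sum>j\<in>{1..m}. card (cyclic_succ_free_from m 1))"
    using m card_cyclic_succ_free_from_le[OF m] by (intro sum.cong) (auto intro: antisym)
  finally show ?thesis by simp
qed

lemma succession_insert_before_iff:
  fixes ys :: "nat list"
  assumes "set ys \<subseteq> {1..m}" "1 \<le> i" "i \<le> m"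
  shows "(i, i + 1) \<in> set (adjs (insert_before (m + 1) 1 ys))
     \<longleftrightarrow> (i, i mod m + 1) \<in> set (adjs ys)"
proof (cases "i = m")
  case True
  have "m + 1 \<notin> set ys" using assms(1) by auto
  with True show ?thesis by (simp add: adjs_insert_before_into)
next
  case False
  with assms(2,3) show ?thesis by (simp add: adjs_insert_before_unchanged)
qed

definition succ_free_n1 :: "nat \<Rightarrow> nat list set" where
  "succ_free_n1 n = {xs \<in> linear_arrangements n.
      (\<forall>i. 1 \<le> i \<and> i < n \<longrightarrow> (i, i + 1) \<notin> set (adjs xs)) \<and> (n, 1) \<in> set (adjs xs)}"

lemma insert_before_succ_free_n1:
  assumes m: "0 < m" and ys: "ys \<in> cyclic_succ_free m"
  shows "insert_before (m + 1) 1 ys \<in> succ_free_n1 (m + 1)"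
proof -
  have set_ys: "set ys = {1..m}" and "distinct ys"
    and free: "\<forall>(a, b) \<in> set (adjs ys). b \<noteq> a mod m + 1"
    using ys by (auto simp: cyclic_succ_free_def linear_arrangements_def)
  have one: "1 \<in> set ys" using set_ys m by simp
  have "set (insert_before (m + 1) 1 ys) = {1..m + 1}"
    using set_ys one by (auto simp: set_insert_before)
  moreover have "distinct (insert_before (m + 1) 1 ys)"
    using \<open>distinct ys\<close> set_ys by (simp add: distinct_insert_before)
  moreover have "(m + 1, 1) \<in> set (adjs (insert_before (m + 1) 1 ys))"
    using one by (rule adjs_insert_before_new)
  moreover have "(i, i + 1) \<notin> set (adjs (insert_before (m + 1) 1 ys))"
    if "1 \<le> i" "i < m + 1" for i
    using that free set_ys succession_insert_before_iff[of ys m i] by auto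
  ultimately show ?thesis
    by (simp add: succ_free_n1_def linear_arrangements_def)
qed

lemma filter_succ_free_n1:
  assumes m: "0 < m" and xs: "xs \<in> succ_free_n1 (m + 1)"
  shows "filter (\<lambda>x. x \<noteq> m + 1) xs \<in> cyclic_succ_free m"
    and "insert_before (m + 1) 1 (filter (\<lambda>x. x \<noteq> m + 1) xs) = xs"
proof -
  let ?ys = "filter (\<lambda>x. x \<noteq> m + 1) xs"
  have "distinct xs" and set_xs: "set xs = {1..m + 1}"
    and free: "\<And>i. 1 \<le> i \<Longrightarrow> i < m + 1 \<Longrightarrow> (i, i + 1) \<notin> set (adjs xs)"
    and "(m + 1, 1) \<in> set (adjs xs)"
    using xs by (auto simp: succ_free_n1_def linear_arrangements_def)
  then show xs_eq: "insert_before (m + 1) 1 ?ys = xs"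
    using m by (intro insert_before_filter) auto
  have set_ys: "set ?ys = {1..m}" using set_xs by auto
  have "\<forall>(a, b) \<in> set (adjs ?ys). b \<noteq> a mod m + 1"
  proof clarify
    fix a assume pair: "(a, a mod m + 1) \<in> set (adjs ?ys)"
    then have "a \<in> {1..m}" using set_ys adjs_in_set[OF pair] by blast
    then have "(a, a + 1) \<in> set (adjs xs)"
      using pair set_ys succession_insert_before_iff[of ?ys m a] xs_eq by auto
    with free[of a] \<open>a \<in> {1..m}\<close> show False by auto
  qed
  with set_ys \<open>distinct xs\<close> show "?ys \<in> cyclic_succ_free m"
    by (simp add: cyclic_succ_free_def linear_arrangements_def)
qed

lemma bij_betw_insert_before_cyclic_succ_free:
  assumes m: "0 < m"
  shows "bij_betw (insert_before (m + 1) 1) (cyclic_succ_free m) (succ_free_n1 (m + 1))"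
proof (rule bij_betw_byWitness[where f' = "filter (\<lambda>x. x \<noteq> m + 1)"])
  show "\<forall>ys \<in> cyclic_succ_free m. filter (\<lambda>x. x \<noteq> m + 1) (insert_before (m + 1) 1 ys) = ys"
    by (auto simp: cyclic_succ_free_def linear_arrangements_def filter_insert_before)
  show "\<forall>xs \<in> succ_free_n1 (m + 1). insert_before (m + 1) 1 (filter (\<lambda>x. x \<noteq> m + 1) xs) = xs"
    using filter_succ_free_n1(2)[OF m] by blast
  show "insert_before (m + 1) 1 ` cyclic_succ_free m \<subseteq> succ_free_n1 (m + 1)"
    using insert_before_succ_free_n1[OF m] by blast
  show "filter (\<lambda>x. x \<noteq> m + 1) ` succ_free_n1 (m + 1) \<subseteq> cyclic_succ_free m"
    using filter_succ_free_n1(1)[OF m] by blast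
qed

theorem corollary4p10:
  fixes n :: nat
  assumes "n \<ge> 2"
  shows "(n - 1) dvd d_n1 n"
proof -
  define m where "m = n - 1"
  have n: "n = m + 1" and m: "0 < m" using assms by (auto simp: m_def)
  have "d_n1 n = card (succ_free_n1 n)"
    by (simp add: d_n1_def succ_free_n1_def contains_pattern_iff_adjs)
  also have "\<dots> = card (cyclic_succ_free m)"
    using bij_betw_insert_before_cyclic_succ_free[OF m] by (simp add: n bij_betw_same_card)
  also have "\<dots> = m * card (cyclic_succ_free_from m 1)"
    using m by (rule card_cyclic_succ_free)
  finally show ?thesis by (simp add: m_def)
qed

end
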